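(* Let $\alpha,\beta,\gamma\in\{1,-1\}$, $u_1,\dots,u_4\in\Bbbk^\times$, and let $D(\mathfrak{D}_8)$ act on $B$ as in the context. Then the group-grade component of the homological determinant $\mathrm{hdet}_B$ is trivial (i.e. $\mathrm{hdet}_B(\phi_g)=\delta_{g,e}$), and $$\mathrm{hdet}_B(r)=1,\qquad \mathrm{hdet}_B(s)=\beta\gamma.$$ In particular the homological determinant is trivial if and only if $\beta=\gamma$.
   Context: Let $\Bbbk=\mathbb{C}$, $i=\sqrt{-1}$, $\omega=e^{\pi i/4}$, $\mathfrak{D}_8=\langle r,s\mid r^8=e,\ s^2=r^4,\ rsrs^{-1}=e\rangle$. The Drinfeld double $D(G)$ has basis $\{\phi_gh\}$, multiplication $(\phi_g h)(\phi_{g'}h')=\delta_{g,hg'h^{-1}}\phi_g hh'$, comultiplication $\Delta(\phi_gh)=\sum_x\phi_xh\otimes\phi_{x^{-1}g}h$, counit $\epsilon(\phi_gh)=\delta_{g,e}$. A right $D(G)$-module algebra is a $G$-graded algebra with a right $G$-action by algebra automorphisms with $A_x\cdot g\subseteq A_{g^{-1}xg}$, $\phi_x$ projecting onto $A_x$. The homological determinant $\mathrm{hdet}_B$ of a Hopf action on an AS regular algebra is that of Kirkman–Kuzmanovich–Zhang; for a Koszul AS regular algebra $B$ it is the character by which $D(G)$ acts on the one-dimensional span of the twisted superpotential of $B$. $B$ is the (Koszul, AS regular of dimension 8) quotient of $\Bbbk\langle x_1,x_2,x_3,x_4,y_1,y_2,z_1,z_2\rangle$ by the relations $y_1y_2-\beta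 y_2y_1$, $z_1z_2-\gamma z_2z_1$, $y_1x_1+u_3x_1y_2$, $y_2x_1-u_3x_1y_1$, $y_1x_2-u_3x_2y_2$, $y_2x_2+u_3x_2y_1$, $y_1x_3+u_3x_3y_2$, $y_2x_3-u_3x_3y_1$, $y_1x_4-u_3x_4y_2$, $y_2x_4+u_3x_4y_1$, $z_1x_1+iu_4x_1z_2$, $z_2x_1-u_4x_1z_1$, $z_1x_2-u_4x_2z_2$, $z_2x_2+iu_4x_2z_1$, $z_1x_3-iu_4x_3z_2$, $z_2x_3+u_4x_3z_1$, $z_1x_4+u_4x_4z_2$, $z_2x_4-iu_4x_4z_1$, $z_1y_1-u_2y_1z_1$, $z_2y_1-u_1y_1z_2$, $z_1y_2-u_1y_2z_1$, $z_2y_2-u_2y_2z_2$, $x_1x_3+x_3x_1$, $x_2x_4+x_4x_2$, $x_2x_1-\frac{\alpha}{\sqrt2}(\omega^3x_3x_2+\omega x_1x_4)$, $x_4x_1-\frac{\alpha}{\sqrt2}(\omega x_1x_2+\omega^7x_3x_4)$, $x_2x_3-\frac{\alpha}{\sqrt2}(\omega^3x_1x_2+\omega^5x_3x_4)$, $x_4x_3-\frac{\alpha}{\sqrt2}(\omega^5x_3x_2+\omega^7x_1x_4)$. The $D(\mathfrak{D}_8)$-structure on generators: $y_1$: grade $r^3$, $y_1\cdot r=\omega^2y_1$, $y_1\cdot s=y_2$; $y_2$: grade $r^5$, $y_2\cdot r=\omega^6y_2$, $y_2\cdot s=y_1$; $z_1$: grade $r^3$, $z_1\cdot r=\omega^7z_1$,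 $z_1\cdot s=z_2$; $z_2$: grade $r^5$, $z_2\cdot r=\omega z_2$, $z_2\cdot s=-z_1$; $x_1,x_2,x_3,x_4$ of grades $sr,sr^3,sr^5,sr^7$, with $x_1\cdot r=x_2$, $x_2\cdot r=x_3$, $x_3\cdot r=x_4$, $x_4\cdot r=-x_1$, $x_1\cdot s=ix_4$, $x_2\cdot s=ix_3$, $x_3\cdot s=ix_2$, $x_4\cdot s=ix_1$. *)

theory Defs
  imports Complex_Main
begin

section \<open>The group D_8 = <r,s | r^8 = e, s^2 = r^4, r s r s^-1 = e>\<close>

text \<open>An element (a,b) with a < 8, b < 2 represents r^a s^b.  Using s r = r^-1 s
  and s^2 = r^4 (central) one gets
  (r^a s^b)(r^c s^d) = r^(a +- c + [b=d=1]*4) s^(b+d).\<close>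

type_synonym d8 = "nat \<times> nat"

definition D8 :: "d8 set" where
  "D8 = {0..<8} \<times> {0..<2}"

definition d8_e :: d8 where "d8_e = (0, 0)"
definition d8_r :: d8 where "d8_r = (1, 0)"
definition d8_s :: d8 where "d8_s = (0, 1)"

fun d8_mul :: "d8 \<Rightarrow> d8 \<Rightarrow> d8" where
  "d8_mul (a, b) (c, d) =
     ((a + (if b = 1 then 8 - c mod 8 else c) + (if b = 1 \<and> d = 1 then 4 else 0)) mod 8,
      (b + d) mod 2)"

text \<open>Generators are indexed 0..7:
  x1 = 0, x2 = 1, x3 = 2, x4 = 3, y1 = 4, y2 = 5, z1 = 6, z2 = 7.\<close>

definition omega :: complex where "omega = cis (pi / 4)"

text \<open>G-grades of the generators: x1,...,x4 have grades
  s r = r^7 s, s r^3 = r^5 s, s r^5 = r^3 s, s r^7 = r s;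
  y1, z1 have grade r^3 and y2, z2 have grade r^5.\<close>
definition gen_grade :: "nat \<Rightarrow> d8" where
  "gen_grade j = (if j = 0 then (7,1) else if j = 1 then (5,1) else if j = 2 then (3,1)
     else if j = 3 then (1,1) else if j = 4 then (3,0) else if j = 5 then (5,0)
     else if j = 6 then (3,0) else (5,0))"

text \<open>Right action of r and s on generators as matrices: e_j . g = sum_k M j k e_k.\<close>
definition Mr :: "nat \<Rightarrow> nat \<Rightarrow> complex" where
  "Mr j k = (if j = 0 \<and> k = 1 then 1 else if j = 1 \<and> k = 2 then 1
     else if j = 2 \<and> k = 3 then 1 else if j = 3 \<and> k = 0 then -1
     else if j = 4 \<and> k = 4 then omega ^ 2 else if j = 5 \<and> k = 5 then omega ^ 6
     else if j = 6 \<and> k = 6 then omega ^ 7 else if j = 7 \<and> k = 7 then omega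
     else 0)"

definition Ms :: "nat \<Rightarrow> nat \<Rightarrow> complex" where
  "Ms j k = (if j = 0 \<and> k = 3 then \<i> else if j = 1 \<and> k = 2 then \<i>
     else if j = 2 \<and> k = 1 then \<i> else if j = 3 \<and> k = 0 then \<i>
     else if j = 4 \<and> k = 5 then 1 else if j = 5 \<and> k = 4 then 1
     else if j = 6 \<and> k = 7 then 1 else if j = 7 \<and> k = 6 then -1
     else 0)"

text \<open>An element of V^(tensor n) (V = span of the 8 generators) is a coefficient
  function on words; only words of length n over {0..<8} are relevant.\<close>

definition words :: "nat \<Rightarrow> nat list set" where
  "words n = {xs. length xs = n \<and> set xs \<subseteq> {..<8}}"

text \<open>Diagonal right action of a linear map M on V on tensors
  (coproduct Delta(h) = h tensor h).\<close>
definition tact :: "(nat \<Rightarrow> nat \<Rightarrow> complex) \<Rightarrow> (nat list \<Rightarrow> complex) \<Rightarrow> (nat list \<Rightarrow> complex)" where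
  "tact M t = (\<lambda>ls. if ls \<in> words (length ls)
       then (\<Sum>js\<in>words (length ls). t js * prod_list (map2 M js ls)) else 0)"

fun grp_act :: "d8 \<Rightarrow> (nat list \<Rightarrow> complex) \<Rightarrow> (nat list \<Rightarrow> complex)" where
  "grp_act (a, b) t = (tact Ms ^^ b) ((tact Mr ^^ a) t)"

text \<open>Grade of a word: product of the generator grades, left to right
  (iterated coproduct of phi_g).\<close>
definition word_grade :: "nat list \<Rightarrow> d8" where
  "word_grade ws = foldl d8_mul d8_e (map gen_grade ws)"

definition phi_act :: "d8 \<Rightarrow> (nat list \<Rightarrow> complex) \<Rightarrow> (nat list \<Rightarrow> complex)" where
  "phi_act g t = (\<lambda>ws. if word_grade ws = g then t ws else 0)"

text \<open>Action of the basis element phi_g h of D(D_8): t . (phi_g h) = (t . phi_g) . h.\<close>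
definition DG_act :: "d8 \<times> d8 \<Rightarrow> (nat list \<Rightarrow> complex) \<Rightarrow> (nat list \<Rightarrow> complex)" where
  "DG_act gh t = grp_act (snd gh) (phi_act (fst gh) t)"

text \<open>A quadratic relation as a list of monomials (coefficient, first index, second index).\<close>
definition rel2 :: "(complex \<times> nat \<times> nat) list \<Rightarrow> nat \<Rightarrow> nat \<Rightarrow> complex" where
  "rel2 l x y = sum_list (map (\<lambda>(c, a, b). if a = x \<and> b = y then c else 0) l)"

definition rels :: "complex \<Rightarrow> complex \<Rightarrow> complex \<Rightarrow> complex \<Rightarrow> complex \<Rightarrow> complex \<Rightarrow> complex
    \<Rightarrow> (complex \<times> nat \<times> nat) list list" where
  "rels \<alpha> \<beta> \<gamma> u1 u2 u3 u4 =
    (let a = \<alpha> / complex_of_real (sqrt 2); w = omega in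
    [ [(1,4,5), (-\<beta>,5,4)],
      [(1,6,7), (-\<gamma>,7,6)],
      [(1,4,0), (u3,0,5)],
      [(1,5,0), (-u3,0,4)],
      [(1,4,1), (-u3,1,5)],
      [(1,5,1), (u3,1,4)],
      [(1,4,2), (u3,2,5)],
      [(1,5,2), (-u3,2,4)],
      [(1,4,3), (-u3,3,5)],
      [(1,5,3), (u3,3,4)],
      [(1,6,0), (\<i>*u4,0,7)],
      [(1,7,0), (-u4,0,6)],
      [(1,6,1), (-u4,1,7)],
      [(1,7,1), (\<i>*u4,1,6)],
      [(1,6,2), (-\<i>*u4,2,7)],
      [(1,7,2), (u4,2,6)],
      [(1,6,3), (u4,3,7)],
      [(1,7,3), (-\<i>*u4,3,6)],
      [(1,6,4), (-u2,4,6)],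
      [(1,7,4), (-u1,4,7)],
      [(1,6,5), (-u1,5,6)],
      [(1,7,5), (-u2,5,7)],
      [(1,0,2), (1,2,0)],
      [(1,1,3), (1,3,1)],
      [(1,1,0), (-a*w^3,2,1), (-a*w,0,3)],
      [(1,3,0), (-a*w,0,1), (-a*w^7,2,3)],
      [(1,1,2), (-a*w^3,0,1), (-a*w^5,2,3)],
      [(1,3,2), (-a*w^5,2,1), (-a*w^7,0,3)] ])"

definition in_R :: "(complex \<times> nat \<times> nat) list list \<Rightarrow> (nat \<Rightarrow> nat \<Rightarrow> complex) \<Rightarrow> bool" where
  "in_R R t \<longleftrightarrow> (\<exists>c :: nat \<Rightarrow> complex. \<forall>x<8. \<forall>y<8.
      t x y = (\<Sum>k<length R. c k * rel2 (R ! k) x y))"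

text \<open>The space W_d = intersection over i of V^i (x) R (x) V^(d-2-i) inside V^(x) d;
  for a Koszul AS regular algebra of dimension d it is the one-dimensional span of
  the twisted superpotential.\<close>
definition superpot_space :: "nat \<Rightarrow> (complex \<times> nat \<times> nat) list list \<Rightarrow> (nat list \<Rightarrow> complex) set" where
  "superpot_space d R = {w. (\<forall>xs. w xs \<noteq> 0 \<longrightarrow> xs \<in> words d) \<and>
      (\<forall>i. i + 2 \<le> d \<longrightarrow> (\<forall>p\<in>words i. \<forall>q\<in>words (d - 2 - i).
          in_R R (\<lambda>x y. w (p @ [x, y] @ q))))}"

text \<open>Homological determinant: the scalar by which phi_g h acts on the span of the
  twisted superpotential of B (dimension 8).\<close>
definition hdet :: "complex \<Rightarrow> complex \<Rightarrow> complex \<Rightarrow> complex \<Rightarrow> complex \<Rightarrow> complex \<Rightarrow> complex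
    \<Rightarrow> d8 \<times> d8 \<Rightarrow> complex" where
  "hdet \<alpha> \<beta> \<gamma> u1 u2 u3 u4 gh =
     (THE c. \<forall>w\<in>superpot_space 8 (rels \<alpha> \<beta> \<gamma> u1 u2 u3 u4).
        DG_act gh w = (\<lambda>xs. c * w xs))"

end

theory Submission
  imports Defs
begin

text \<open>The algebra \<open>B\<close> is built from the subalgebra in the \<open>x\<^sub>j\<close> and two quantum planes in the
  \<open>y\<^sub>i\<close> and \<open>z\<^sub>i\<close>, glued by relations that commute \<open>y\<close>'s and \<open>z\<close>'s past \<open>x\<close>'s (swapping the
  indices) and \<open>z\<close>'s past \<open>y\<close>'s. Sorting a word into the shape \<open>x x x x y y z z\<close> and multiplying
  the scalar picked up by the superpotentials of the three pieces gives an explicit nonzero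
  element of \<open>W\<^sub>8\<close>. Conversely, rank the generators as \<open>x\<^sub>2 < x\<^sub>4 < x\<^sub>1 < x\<^sub>3 < y\<^sub>1 < y\<^sub>2 < z\<^sub>1 < z\<^sub>2\<close>:
  every relation expresses a product \<open>a b\<close> with \<open>b \<le> a\<close> through products whose first letter is
  smaller than \<open>a\<close>, so by induction along the lexicographic order an element of \<open>W\<^sub>8\<close> is determined
  by its coefficient at \<open>x\<^sub>2 x\<^sub>4 x\<^sub>1 x\<^sub>3 y\<^sub>1 y\<^sub>2 z\<^sub>1 z\<^sub>2\<close>. Thus \<open>W\<^sub>8\<close> is a line, \<open>D(\<D>\<^sub>8)\<close> acts on it by a
  character, and evaluating at that word shows that \<open>\<phi>\<^sub>g\<close> keeps only grade \<open>e\<close>, \<open>r\<close> acts trivially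
  and \<open>s\<close> acts by \<open>\<beta>\<gamma>\<close>.\<close>

section \<open>The relations of \<open>B\<close>\<close>

lemma omega_sq: "omega ^ 2 = \<i>"
  by (simp add: omega_def DeMoivre)

lemma omega_pow_4: "omega ^ 4 = -1"
  by (simp add: omega_def DeMoivre)

lemma omega_pow_6: "omega ^ 6 = - \<i>"
  using power_add[of omega 4 2] by (simp add: omega_pow_4 omega_sq)

lemma omega_odd_powers: "omega ^ 3 = \<i> * omega" "omega ^ 5 = - omega" "omega ^ 7 = - \<i> * omega"
proof -
  show "omega ^ 3 = \<i> * omega" using power_add[of omega 2 1] by (simp add: omega_sq)
  show "omega ^ 5 = - omega" using power_add[of omega 4 1] by (simp add: omega_pow_4)
  show "omega ^ 7 = - \<i> * omega" using power_add[of omega 4 3] \<open>omega ^ 3 = \<i> * omega\<close>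
    by (simp add: omega_pow_4)
qed

text \<open>Stated in the shape in which the simplifier presents the coefficients
  \<open>\<alpha>/\<surd>2 \<omega>\<^sup>k\<close> of the quadratic \<open>x\<close>-relations.\<close>
lemma omega_scaled:
  fixes x :: complex
  shows "x * omega * 2 / complex_of_real (sqrt 2) = x * (1 + \<i>)"
    "x * omega ^ 3 * 2 / complex_of_real (sqrt 2) = x * (\<i> - 1)"
    "x * omega ^ 5 * 2 / complex_of_real (sqrt 2) = x * (- 1 - \<i>)"
    "x * omega ^ 7 * 2 / complex_of_real (sqrt 2) = x * (1 - \<i>)"
proof -
  have "omega = complex_of_real (sqrt 2 / 2) * (1 + \<i>)"
    by (simp add: omega_def cis.ctr complex_eq_iff cos_45 sin_45 real_sqrt_divide)
  then have "omega * 2 / complex_of_real (sqrt 2) = 1 + \<i>"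
    by (simp add: field_simps)
  then have base: "y * omega * 2 / complex_of_real (sqrt 2) = y * (1 + \<i>)" for y :: complex
    by (metis mult.assoc times_divide_eq_right)
  show "x * omega * 2 / complex_of_real (sqrt 2) = x * (1 + \<i>)" by (fact base)
  show "x * omega ^ 3 * 2 / complex_of_real (sqrt 2) = x * (\<i> - 1)"
    using base[of "x * \<i>"] by (simp add: omega_odd_powers algebra_simps)
  show "x * omega ^ 5 * 2 / complex_of_real (sqrt 2) = x * (- 1 - \<i>)"
    using base[of "- x"] by (simp add: omega_odd_powers algebra_simps)
  show "x * omega ^ 7 * 2 / complex_of_real (sqrt 2) = x * (1 - \<i>)"
    using base[of "- x * \<i>"] by (simp add: omega_odd_powers algebra_simps)
qed

lemma rels_explicit: "rels al be ga u1 u2 u3 u4 =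
    [ [(1,4,5), (-be,5,4)],
      [(1,6,7), (-ga,7,6)],
      [(1,4,0), (u3,0,5)],
      [(1,5,0), (-u3,0,4)],
      [(1,4,1), (-u3,1,5)],
      [(1,5,1), (u3,1,4)],
      [(1,4,2), (u3,2,5)],
      [(1,5,2), (-u3,2,4)],
      [(1,4,3), (-u3,3,5)],
      [(1,5,3), (u3,3,4)],
      [(1,6,0), (\<i>*u4,0,7)],
      [(1,7,0), (-u4,0,6)],
      [(1,6,1), (-u4,1,7)],
      [(1,7,1), (\<i>*u4,1,6)],
      [(1,6,2), (-\<i>*u4,2,7)],
      [(1,7,2), (u4,2,6)],
      [(1,6,3), (u4,3,7)],
      [(1,7,3), (-\<i>*u4,3,6)],
      [(1,6,4), (-u2,4,6)],
      [(1,7,4), (-u1,4,7)],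
      [(1,6,5), (-u1,5,6)],
      [(1,7,5), (-u2,5,7)],
      [(1,0,2), (1,2,0)],
      [(1,1,3), (1,3,1)],
      [(1,1,0), (-(al*(-1+\<i>)/2),2,1), (-(al*(1+\<i>)/2),0,3)],
      [(1,3,0), (-(al*(1+\<i>)/2),0,1), (-(al*(1-\<i>)/2),2,3)],
      [(1,1,2), (-(al*(-1+\<i>)/2),0,1), (-(al*(-1-\<i>)/2),2,3)],
      [(1,3,2), (-(al*(-1-\<i>)/2),2,1), (-(al*(1-\<i>)/2),0,3)] ]"
  unfolding rels_def Let_def by (simp add: omega_scaled)

lemma less_8_cases: "(x::nat) < 8 \<longleftrightarrow> x = 0 \<or> x = 1 \<or> x = 2 \<or> x = 3 \<or> x = 4 \<or> x = 5 \<or> x = 6 \<or> x = 7"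
  by auto

lemma less_4_cases: "(x::nat) < 4 \<longleftrightarrow> x = 0 \<or> x = 1 \<or> x = 2 \<or> x = 3"
  by auto

lemma sum_lessThan_length_Cons:
  "(\<Sum>k<length (a # L). c k * f ((a # L) ! k)) = c 0 * f a + (\<Sum>k<length L. c (Suc k) * f (L ! k))"
  unfolding length_Cons sum.lessThan_Suc_shift by simp

locale B_params =
  fixes al be ga u1 u2 u3 u4 :: complex
  assumes al: "al \<in> {1, -1}" and be: "be \<in> {1, -1}" and ga: "ga \<in> {1, -1}"
    and u1: "u1 \<noteq> 0" and u2: "u2 \<noteq> 0" and u3: "u3 \<noteq> 0" and u4: "u4 \<noteq> 0"
begin

definition in_R_xx :: "(nat \<Rightarrow> nat \<Rightarrow> complex) \<Rightarrow> bool" where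
  "in_R_xx t \<longleftrightarrow> t 0 0 = 0 \<and> t 1 1 = 0 \<and> t 2 2 = 0 \<and> t 3 3 = 0 \<and> t 0 2 = t 2 0 \<and> t 1 3 = t 3 1
    \<and> t 2 1 = - (al*(-1+\<i>)/2) * t 1 0 - (al*(-1-\<i>)/2) * t 3 2
    \<and> t 0 3 = - (al*(1+\<i>)/2) * t 1 0 - (al*(1-\<i>)/2) * t 3 2
    \<and> t 0 1 = - (al*(1+\<i>)/2) * t 3 0 - (al*(-1+\<i>)/2) * t 1 2
    \<and> t 2 3 = - (al*(1-\<i>)/2) * t 3 0 - (al*(-1-\<i>)/2) * t 1 2"

definition in_R_yz :: "(nat \<Rightarrow> nat \<Rightarrow> complex) \<Rightarrow> bool" where
  "in_R_yz t \<longleftrightarrow>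
    t 4 4 = 0 \<and> t 5 5 = 0 \<and> t 5 4 = - be * t 4 5 \<and>
    t 6 6 = 0 \<and> t 7 7 = 0 \<and> t 7 6 = - ga * t 6 7 \<and>
    t 0 5 = u3 * t 4 0 \<and> t 0 4 = - u3 * t 5 0 \<and> t 1 5 = - u3 * t 4 1 \<and> t 1 4 = u3 * t 5 1 \<and>
    t 2 5 = u3 * t 4 2 \<and> t 2 4 = - u3 * t 5 2 \<and> t 3 5 = - u3 * t 4 3 \<and> t 3 4 = u3 * t 5 3 \<and>
    t 0 7 = \<i> * u4 * t 6 0 \<and> t 0 6 = - u4 * t 7 0 \<and> t 1 7 = - u4 * t 6 1 \<and> t 1 6 = \<i> * u4 * t 7 1 \<and>
    t 2 7 = - \<i> * u4 * t 6 2 \<and> t 2 6 = u4 * t 7 2 \<and> t 3 7 = u4 * t 6 3 \<and> t 3 6 = - \<i> * u4 * t 7 3 \<and>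
    t 4 6 = - u2 * t 6 4 \<and> t 4 7 = - u1 * t 7 4 \<and> t 5 6 = - u1 * t 6 5 \<and> t 5 7 = - u2 * t 7 5"

definition in_R_expl :: "(nat \<Rightarrow> nat \<Rightarrow> complex) \<Rightarrow> bool" where
  "in_R_expl t \<longleftrightarrow> in_R_xx t \<and> in_R_yz t"

lemma in_R_rels_iff: "in_R (rels al be ga u1 u2 u3 u4) t \<longleftrightarrow> in_R_expl t"
proof
  assume "in_R (rels al be ga u1 u2 u3 u4) t"
  then obtain c where "\<And>x y. x < 8 \<Longrightarrow> y < 8 \<Longrightarrow> t x y =
     (\<Sum>k<length (rels al be ga u1 u2 u3 u4). c k * rel2 (rels al be ga u1 u2 u3 u4 ! k) x y)"
    unfolding in_R_def by blast
  then show "in_R_expl t"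
    unfolding in_R_expl_def in_R_xx_def in_R_yz_def
    by (simp add: rels_explicit sum_lessThan_length_Cons rel2_def algebra_simps)
next
  assume "in_R_expl t"
  \<comment> \<open>the coefficient of each relation is the value of \<open>t\<close> at its leading monomial\<close>
  define c where "c = [t 4 5, t 6 7, t 4 0, t 5 0, t 4 1, t 5 1, t 4 2, t 5 2, t 4 3, t 5 3,
     t 6 0, t 7 0, t 6 1, t 7 1, t 6 2, t 7 2, t 6 3, t 7 3, t 6 4, t 7 4, t 6 5, t 7 5,
     t 0 2, t 1 3, t 1 0, t 3 0, t 1 2, t 3 2]"
  have "\<forall>x<8. \<forall>y<8. t x y =
      (\<Sum>k<length (rels al be ga u1 u2 u3 u4). c ! k * rel2 (rels al be ga u1 u2 u3 u4 ! k) x y)"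
    using \<open>in_R_expl t\<close> unfolding less_8_cases rels_explicit sum_lessThan_length_Cons
    by (auto simp: in_R_expl_def in_R_xx_def in_R_yz_def c_def rel2_def algebra_simps)
  then show "in_R (rels al be ga u1 u2 u3 u4) t" unfolding in_R_def by blast
qed

end

lemma finite_words: "finite (words n)"
proof -
  have "words n = {xs. set xs \<subseteq> {..<8} \<and> length xs = n}" by (auto simp: words_def)
  then show ?thesis using finite_lists_length_eq[of "{..<8::nat}" n] by simp
qed

lemma map2_map_left: "map2 f (map g xs) xs = map (\<lambda>x. f (g x) x) xs"
  by (induction xs) auto

lemma tact_monomial:
  assumes \<pi>_range: "\<And>l. l < 8 \<Longrightarrow> \<pi> l < 8"
    and monomial: "\<And>j l. l < 8 \<Longrightarrow> j < 8 \<Longrightarrow> M j l \<noteq> 0 \<Longrightarrow> j = \<pi> l"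
  shows "tact M t ls = (if ls \<in> words (length ls)
      then t (map \<pi> ls) * prod_list (map (\<lambda>l. M (\<pi> l) l) ls) else 0)"
proof (cases "ls \<in> words (length ls)")
  case False
  then show ?thesis by (simp add: tact_def)
next
  case True
  let ?n = "length ls" and ?f = "\<lambda>js. t js * prod_list (map2 M js ls)"
  have ls: "set ls \<subseteq> {..<8}" using True by (simp add: words_def)
  have \<pi>ls: "map \<pi> ls \<in> words ?n" using ls \<pi>_range by (auto simp: words_def)
  have "?f js = 0" if js: "js \<in> words ?n" "js \<noteq> map \<pi> ls" for js
  proof -
    have len: "length js = ?n" using js by (simp add: words_def)
    then obtain k where k: "k < ?n" "js ! k \<noteq> \<pi> (ls ! k)"
      using js(2) by (metis length_map nth_equalityI nth_map)
    have "js ! k \<in> set js" "ls ! k \<in> set ls" using k len by simp_all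
    then have "js ! k < 8" "ls ! k < 8" using js ls by (auto simp: words_def)
    have "map2 M js ls ! k = M (js ! k) (ls ! k)" "k < length (map2 M js ls)" using k len by simp_all
    then have "M (js ! k) (ls ! k) \<in> set (map2 M js ls)" by (metis nth_mem)
    moreover have "M (js ! k) (ls ! k) = 0"
      using monomial k(2) \<open>js ! k < 8\<close> \<open>ls ! k < 8\<close> by blast
    ultimately show ?thesis by (simp add: prod_list_zero_iff)
  qed
  then have "(\<Sum>js\<in>words ?n. ?f js) = ?f (map \<pi> ls)"
    using sum.remove[OF finite_words \<pi>ls, of ?f] by (simp add: sum.neutral)
  then show ?thesis using True by (simp add: tact_def map2_map_left)
qed

definition perm_r :: "nat \<Rightarrow> nat" where
  "perm_r l = (if l = 0 then 3 else if l = 1 then 0 else if l = 2 then 1 else if l = 3 then 2 else l)"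

definition perm_s :: "nat \<Rightarrow> nat" where
  "perm_s l = (if l = 0 then 3 else if l = 1 then 2 else if l = 2 then 1 else if l = 3 then 0
     else if l = 4 then 5 else if l = 5 then 4 else if l = 6 then 7 else if l = 7 then 6 else l)"

lemma tact_Mr: "tact Mr t ls = (if ls \<in> words (length ls)
      then t (map perm_r ls) * prod_list (map (\<lambda>l. Mr (perm_r l) l) ls) else 0)"
  by (rule tact_monomial) (auto simp: perm_r_def Mr_def less_8_cases)

lemma tact_Ms: "tact Ms t ls = (if ls \<in> words (length ls)
      then t (map perm_s ls) * prod_list (map (\<lambda>l. Ms (perm_s l) l) ls) else 0)"
  by (rule tact_monomial) (auto simp: perm_s_def Ms_def less_8_cases split: if_splits)

definition homogeneous :: "(nat \<Rightarrow> nat \<Rightarrow> 'b) \<Rightarrow> ('a \<times> nat \<times> nat) list \<Rightarrow> bool" where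
  "homogeneous f l \<longleftrightarrow>
     (\<forall>c x y c' x' y'. (c, x, y) \<in> set l \<longrightarrow> (c', x', y') \<in> set l \<longrightarrow> f x y = f x' y')"

lemma rel2_nonzero_monomial: "rel2 l x y \<noteq> 0 \<Longrightarrow> \<exists>c. (c, x, y) \<in> set l"
  by (induction l) (auto simp: rel2_def split: if_splits)

text \<open>Each relation lies in a single degree, so the restriction keeps or drops its coefficient.\<close>
lemma in_R_restrict_homogeneous:
  assumes hom: "\<forall>l\<in>set R. homogeneous f l" and t: "in_R R t"
  shows "in_R R (\<lambda>x y. if P (f x y) then t x y else 0)"
proof -
  obtain c where c: "\<forall>x<8. \<forall>y<8. t x y = (\<Sum>k<length R. c k * rel2 (R ! k) x y)"
    using t unfolding in_R_def by blast
  define keep where "keep k \<longleftrightarrow> (\<exists>x y. rel2 (R ! k) x y \<noteq> 0 \<and> P (f x y))" for k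
  have same_degree: "f x y = f x' y'"
    if k: "k < length R" and nonzero: "rel2 (R ! k) x y \<noteq> 0" "rel2 (R ! k) x' y' \<noteq> 0"
    for k x y x' y'
  proof -
    obtain c1 c2 where "(c1, x, y) \<in> set (R ! k)" "(c2, x', y') \<in> set (R ! k)"
      using nonzero rel2_nonzero_monomial by blast
    moreover have "homogeneous f (R ! k)" using hom k by simp
    ultimately show ?thesis unfolding homogeneous_def by blast
  qed
  have restricted_term: "(if P (f x y) then c k * rel2 (R ! k) x y else 0)
      = (if keep k then c k else 0) * rel2 (R ! k) x y"
    if "k < length R" for k x y
  proof (cases "rel2 (R ! k) x y = 0")
    case False
    then have "keep k \<longleftrightarrow> P (f x y)" using same_degree[OF that] unfolding keep_def by metis
    then show ?thesis by simp
  qed simp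
  have "(if P (f x y) then t x y else 0) = (\<Sum>k<length R. (if keep k then c k else 0) * rel2 (R ! k) x y)"
    if "x < 8" "y < 8" for x y
  proof -
    have "(if P (f x y) then t x y else 0) = (\<Sum>k<length R. if P (f x y) then c k * rel2 (R ! k) x y else 0)"
      using c that by simp
    also have "\<dots> = (\<Sum>k<length R. (if keep k then c k else 0) * rel2 (R ! k) x y)"
      using restricted_term by (intro sum.cong) simp_all
    finally show ?thesis .
  qed
  then show ?thesis unfolding in_R_def by (intro exI[of _ "\<lambda>k. if keep k then c k else 0"]) blast
qed

lemma D8_enum: "D8 = set (List.product [0, 1, 2, 3, 4, 5, 6, 7] [0, 1])"
proof -
  have "[0..<8] = [0, 1, 2, 3, 4, 5, 6, 7::nat]" "[0..<2] = [0, 1::nat]" by (simp_all add: upt_rec)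
  then show ?thesis unfolding D8_def by (metis atLeastLessThan_upt set_product)
qed

lemma rels_homogeneous:
  "\<forall>g\<in>D8. \<forall>l\<in>set (rels al be ga u1 u2 u3 u4).
     homogeneous (\<lambda>x y. d8_mul (d8_mul g (gen_grade x)) (gen_grade y)) l"
  unfolding D8_enum rels_explicit by (simp add: homogeneous_def gen_grade_def)

lemma d8_mul_D8: "d8_mul x y \<in> D8"
  by (cases x; cases y) (auto simp: D8_def)

lemma foldl_d8_mul_D8: "a \<in> D8 \<Longrightarrow> foldl d8_mul a l \<in> D8"
  by (induction l arbitrary: a) (auto simp: d8_mul_D8)

context B_params
begin

lemma in_R_expl_cong:
  "(\<And>x y. x < 8 \<Longrightarrow> y < 8 \<Longrightarrow> t x y = t' x y) \<Longrightarrow> in_R_expl t \<longleftrightarrow> in_R_expl t'"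
  unfolding in_R_expl_def in_R_xx_def in_R_yz_def by simp

lemma in_R_expl_diff:
  "in_R_expl t1 \<Longrightarrow> in_R_expl t2 \<Longrightarrow> in_R_expl (\<lambda>x y. t1 x y - c * t2 x y)"
  unfolding in_R_expl_def in_R_xx_def in_R_yz_def by simp (simp add: field_simps)

lemma in_R_expl_twist_r:
  assumes "in_R_expl t"
  shows "in_R_expl (\<lambda>x y. K * (Mr (perm_r x) x * Mr (perm_r y) y) * t (perm_r x) (perm_r y))"
proof -
  have "al = 1 \<or> al = -1" using al by simp
  then show ?thesis using assms unfolding in_R_expl_def in_R_xx_def in_R_yz_def
    apply (elim disjE)
     apply (simp_all add: Mr_def perm_r_def omega_sq omega_pow_6 omega_odd_powers)
     apply (simp_all add: field_simps)
    done
qed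

lemma in_R_expl_twist_s:
  assumes "in_R_expl t"
  shows "in_R_expl (\<lambda>x y. K * (Ms (perm_s x) x * Ms (perm_s y) y) * t (perm_s x) (perm_s y))"
proof -
  have "al = 1 \<or> al = -1" "be = 1 \<or> be = -1" "ga = 1 \<or> ga = -1" using al be ga by simp_all
  then show ?thesis using assms unfolding in_R_expl_def in_R_xx_def in_R_yz_def
    apply (elim disjE)
           apply (simp_all add: Ms_def perm_s_def)
           apply (simp_all add: field_simps)
    done
qed

section \<open>Superpotentials and the action of \<open>D(\<D>\<^sub>8)\<close>\<close>

definition superpot :: "(nat list \<Rightarrow> complex) \<Rightarrow> bool" where
  "superpot w \<longleftrightarrow> (\<forall>xs. w xs \<noteq> 0 \<longrightarrow> xs \<in> words 8) \<and>
     (\<forall>p q. set p \<subseteq> {..<8} \<longrightarrow> set q \<subseteq> {..<8} \<longrightarrow> length p + length q = 6 \<longrightarrow>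
        in_R_expl (\<lambda>x y. w (p @ [x, y] @ q)))"

lemma superpot_space_iff: "w \<in> superpot_space 8 (rels al be ga u1 u2 u3 u4) \<longleftrightarrow> superpot w"
proof -
  have "(\<exists>i. i + 2 \<le> 8 \<and> p \<in> words i \<and> q \<in> words (8 - 2 - i)) \<longleftrightarrow>
      set p \<subseteq> {..<8} \<and> set q \<subseteq> {..<8} \<and> length p + length q = 6" for p q :: "nat list"
    by (auto simp: words_def)
  then show ?thesis
    unfolding superpot_space_def superpot_def in_R_rels_iff by blast
qed

lemma superpot_diff:
  assumes w1: "superpot w1" and w2: "superpot w2"
  shows "superpot (\<lambda>xs. w1 xs - c * w2 xs)"
  unfolding superpot_def
proof (intro conjI allI impI)
  show "xs \<in> words 8" if "w1 xs - c * w2 xs \<noteq> 0" for xs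
  proof -
    from that have "w1 xs \<noteq> 0 \<or> w2 xs \<noteq> 0" by auto
    then show ?thesis using w1 w2 unfolding superpot_def by blast
  qed
  show "in_R_expl (\<lambda>x y. w1 (p @ [x, y] @ q) - c * w2 (p @ [x, y] @ q))"
    if "set p \<subseteq> {..<8}" "set q \<subseteq> {..<8}" "length p + length q = 6" for p q
  proof (rule in_R_expl_diff)
    show "in_R_expl (\<lambda>x y. w1 (p @ [x, y] @ q))" "in_R_expl (\<lambda>x y. w2 (p @ [x, y] @ q))"
      using that w1 w2 unfolding superpot_def by simp_all
  qed
qed

lemma superpot_tact_monomial:
  assumes \<pi>_range: "\<And>l. l < 8 \<Longrightarrow> \<pi> l < 8"
    and monomial: "\<And>j l. l < 8 \<Longrightarrow> j < 8 \<Longrightarrow> M j l \<noteq> 0 \<Longrightarrow> j = \<pi> l"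
    and twist: "\<And>t K. in_R_expl t \<Longrightarrow>
      in_R_expl (\<lambda>x y. K * (M (\<pi> x) x * M (\<pi> y) y) * t (\<pi> x) (\<pi> y))"
    and w: "superpot w"
  shows "superpot (tact M w)"
  unfolding superpot_def
proof (intro conjI allI impI)
  have tact: "tact M t ls = (if ls \<in> words (length ls)
      then t (map \<pi> ls) * prod_list (map (\<lambda>l. M (\<pi> l) l) ls) else 0)" for t ls
    using \<pi>_range monomial by (rule tact_monomial)
  show "xs \<in> words 8" if "tact M w xs \<noteq> 0" for xs
  proof -
    have "xs \<in> words (length xs)" "w (map \<pi> xs) \<noteq> 0"
      using that unfolding tact by (simp_all split: if_splits)
    then show ?thesis using w unfolding superpot_def words_def by auto
  qed
  fix p q :: "nat list"
  assume pq: "set p \<subseteq> {..<8}" "set q \<subseteq> {..<8}" "length p + length q = 6"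
  let ?m = "\<lambda>l. M (\<pi> l) l"
  let ?K = "prod_list (map ?m p) * prod_list (map ?m q)"
  have "set (map \<pi> p) \<subseteq> {..<8}" "set (map \<pi> q) \<subseteq> {..<8}" using pq \<pi>_range by auto
  then have "in_R_expl (\<lambda>x y. w (map \<pi> p @ [x, y] @ map \<pi> q))"
    using w pq unfolding superpot_def by simp
  then have twisted: "in_R_expl (\<lambda>x y. ?K * (?m x * ?m y) * w (map \<pi> p @ [\<pi> x, \<pi> y] @ map \<pi> q))"
    by (rule twist)
  show "in_R_expl (\<lambda>x y. tact M w (p @ [x, y] @ q))"
  proof (subst in_R_expl_cong)
    show "tact M w (p @ [x, y] @ q) = ?K * (?m x * ?m y) * w (map \<pi> p @ [\<pi> x, \<pi> y] @ map \<pi> q)"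
      if "x < 8" "y < 8" for x y
      using pq that by (simp add: tact words_def algebra_simps)
  qed (rule twisted)
qed

lemma superpot_tact_r: "superpot w \<Longrightarrow> superpot (tact Mr w)"
proof (rule superpot_tact_monomial[of perm_r Mr])
  show "in_R_expl (\<lambda>x y. K * (Mr (perm_r x) x * Mr (perm_r y) y) * t (perm_r x) (perm_r y))"
    if "in_R_expl t" for t K
    using that by (rule in_R_expl_twist_r)
qed (auto simp: perm_r_def Mr_def less_8_cases)

lemma superpot_tact_s: "superpot w \<Longrightarrow> superpot (tact Ms w)"
proof (rule superpot_tact_monomial[of perm_s Ms])
  show "in_R_expl (\<lambda>x y. K * (Ms (perm_s x) x * Ms (perm_s y) y) * t (perm_s x) (perm_s y))"
    if "in_R_expl t" for t K
    using that by (rule in_R_expl_twist_s)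
qed (auto simp: perm_s_def Ms_def less_8_cases split: if_splits)

lemma superpot_phi_act:
  assumes w: "superpot w"
  shows "superpot (phi_act g w)"
  unfolding superpot_def
proof (intro conjI allI impI)
  show "xs \<in> words 8" if "phi_act g w xs \<noteq> 0" for xs
    using that w by (auto simp: superpot_def phi_act_def split: if_splits)
  fix p q :: "nat list"
  assume pq: "set p \<subseteq> {..<8}" "set q \<subseteq> {..<8}" "length p + length q = 6"
  let ?G = "foldl d8_mul d8_e (map gen_grade p)"
  have "?G \<in> D8" by (rule foldl_d8_mul_D8) (simp add: D8_def d8_e_def)
  then have "\<forall>l\<in>set (rels al be ga u1 u2 u3 u4).
      homogeneous (\<lambda>x y. d8_mul (d8_mul ?G (gen_grade x)) (gen_grade y)) l"
    using rels_homogeneous by blast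
  moreover have "in_R (rels al be ga u1 u2 u3 u4) (\<lambda>x y. w (p @ [x, y] @ q))"
    using w pq unfolding superpot_def in_R_rels_iff by blast
  ultimately have "in_R (rels al be ga u1 u2 u3 u4) (\<lambda>x y.
      if foldl d8_mul (d8_mul (d8_mul ?G (gen_grade x)) (gen_grade y)) (map gen_grade q) = g
      then w (p @ [x, y] @ q) else 0)"
    by (rule in_R_restrict_homogeneous)
  moreover have phi: "(\<lambda>x y. phi_act g w (p @ [x, y] @ q)) = (\<lambda>x y.
      if foldl d8_mul (d8_mul (d8_mul ?G (gen_grade x)) (gen_grade y)) (map gen_grade q) = g
      then w (p @ [x, y] @ q) else 0)"
    by (simp add: fun_eq_iff phi_act_def word_grade_def)
  ultimately show "in_R_expl (\<lambda>x y. phi_act g w (p @ [x, y] @ q))"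
    unfolding in_R_rels_iff[symmetric] by (simp only: phi)
qed

end

section \<open>An explicit superpotential\<close>

definition is_x :: "nat \<Rightarrow> bool" where "is_x a \<longleftrightarrow> a < 4"
definition is_y :: "nat \<Rightarrow> bool" where "is_y a \<longleftrightarrow> a = 4 \<or> a = 5"
definition is_z :: "nat \<Rightarrow> bool" where "is_z a \<longleftrightarrow> a = 6 \<or> a = 7"

lemma letter_kinds [simp]:
  "is_x 0" "is_x 1" "is_x 2" "is_x 3" "\<not> is_x 4" "\<not> is_x 5" "\<not> is_x 6" "\<not> is_x 7"
  "is_y 4" "is_y 5" "\<not> is_y 0" "\<not> is_y 1" "\<not> is_y 2" "\<not> is_y 3" "\<not> is_y 6" "\<not> is_y 7"
  "is_z 6" "is_z 7" "\<not> is_z 0" "\<not> is_z 1" "\<not> is_z 2" "\<not> is_z 3" "\<not> is_z 4" "\<not> is_z 5"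
  by (simp_all add: is_x_def is_y_def is_z_def)

text \<open>Commuting \<open>y\<^sub>i\<close> or \<open>z\<^sub>i\<close> past an \<open>x\<^sub>j\<close> turns it into \<open>y\<^sub>3\<^sub>-\<^sub>i\<close> resp. \<open>z\<^sub>3\<^sub>-\<^sub>i\<close>.\<close>
definition flip :: "nat \<Rightarrow> nat" where
  "flip a = (if a = 4 then 5 else if a = 5 then 4 else if a = 6 then 7 else if a = 7 then 6 else a)"

definition flips :: "nat \<Rightarrow> nat \<Rightarrow> nat" where "flips n a = (if even n then a else flip a)"

definition count_x :: "nat list \<Rightarrow> nat" where "count_x ws = length (filter is_x ws)"

text \<open>The letters of kind \<open>P\<close> in \<open>ws\<close>, as they read after being moved to the right past all
  \<open>x\<close>-letters of \<open>ws\<close> and \<open>k\<close> further ones.\<close>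
fun pushed :: "(nat \<Rightarrow> bool) \<Rightarrow> nat \<Rightarrow> nat list \<Rightarrow> nat list" where
  "pushed P k [] = []"
| "pushed P k (a # ws) = (if P a then [flips (count_x ws + k) a] else []) @ pushed P k ws"

lemma flip_flip [simp]: "flip (flip a) = a" by (simp add: flip_def)
lemma flips_0 [simp]: "flips 0 a = a" by (simp add: flips_def)
lemma flips_x: "is_x a \<Longrightarrow> flips n a = a" by (auto simp: flips_def flip_def is_x_def)
lemma flips_flips: "flips m (flips n a) = flips (n + m) a" by (auto simp: flips_def)
lemma flips_Suc: "flips (Suc n) a = flips n (flip a)" by (auto simp: flips_def)
lemma count_x_append [simp]: "count_x (xs @ ys) = count_x xs + count_x ys" by (simp add: count_x_def)
lemma count_x_Nil [simp]: "count_x [] = 0" by (simp add: count_x_def)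
lemma count_x_Cons [simp]: "count_x (a # ws) = (if is_x a then Suc (count_x ws) else count_x ws)"
  by (simp add: count_x_def)

lemma pushed_append: "pushed P k (p @ m) = pushed P (count_x m + k) p @ pushed P k m"
  by (induction p) (auto simp: add.assoc)

definition pair_superpot :: "nat \<Rightarrow> nat \<Rightarrow> complex \<Rightarrow> nat list \<Rightarrow> complex" where
  "pair_superpot a b c l = (if l = [a, b] then 1 else if l = [b, a] then - c else 0)"

lemma pair_superpot_dup: "a \<noteq> b \<Longrightarrow> pair_superpot a b c (A @ d # d # B) = 0"
  by (cases A; cases B) (auto simp: pair_superpot_def)

lemma pair_superpot_swap:
  assumes "c * c = 1" "a \<noteq> b" "(a', b') = (a, b) \<or> (a', b') = (b, a)"
  shows "pair_superpot a b c (A @ [b', a'] @ B) = - c * pair_superpot a b c (A @ [a', b'] @ B)"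
  using assms by (cases A; cases B) (auto simp: pair_superpot_def)

context B_params
begin

text \<open>The one-dimensional superpotential of the subalgebra generated by the \<open>x\<^sub>j\<close>:
  the word \<open>xs\<close> has coefficient \<open>a + \<alpha> b\<close> if \<open>(xs, a, b)\<close> is listed, and \<open>0\<close> otherwise.\<close>
definition x_superpot_table :: "(nat list \<times> complex \<times> complex) list" where
  "x_superpot_table =
   [([0,1,0,3], (-1, 0)), ([0,1,2,1], (\<i>, 0)), ([0,1,3,2], (0, 1+\<i>)), ([0,2,1,3], (0, -1+\<i>)),
    ([0,2,3,1], (0, -1+\<i>)), ([0,3,0,1], (1, 0)), ([0,3,1,2], (0, 1+\<i>)), ([0,3,2,3], (\<i>, 0)),
    ([1,0,1,2], (-1, 0)), ([1,0,2,3], (0, -1-\<i>)), ([1,0,3,0], (\<i>, 0)), ([1,2,0,3], (0, -1-\<i>)),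
    ([1,2,1,0], (1, 0)), ([1,2,3,2], (\<i>, 0)), ([1,3,0,2], (0, 1-\<i>)), ([1,3,2,0], (0, 1-\<i>)),
    ([2,0,1,3], (0, -1+\<i>)), ([2,0,3,1], (0, -1+\<i>)), ([2,1,0,1], (-\<i>, 0)), ([2,1,2,3], (-1, 0)),
    ([2,1,3,0], (0, 1+\<i>)), ([2,3,0,3], (-\<i>, 0)), ([2,3,1,0], (0, 1+\<i>)), ([2,3,2,1], (1, 0)),
    ([3,0,1,0], (-\<i>, 0)), ([3,0,2,1], (0, -1-\<i>)), ([3,0,3,2], (-1, 0)), ([3,1,0,2], (0, 1-\<i>)),
    ([3,1,2,0], (0, 1-\<i>)), ([3,2,0,1], (0, -1-\<i>)), ([3,2,1,2], (-\<i>, 0)), ([3,2,3,0], (1, 0))]"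

definition x_superpot :: "nat list \<Rightarrow> complex" where
  "x_superpot xs = (case map_of x_superpot_table xs of None \<Rightarrow> 0 | Some (a, b) \<Rightarrow> a + al * b)"

lemma x_superpot_length: "length xs \<noteq> 4 \<Longrightarrow> x_superpot xs = 0"
proof -
  assume "length xs \<noteq> 4"
  then have "xs \<notin> fst ` set x_superpot_table" by (auto simp: x_superpot_table_def)
  then have "map_of x_superpot_table xs = None" by (simp add: map_of_eq_None_iff)
  then show ?thesis by (simp add: x_superpot_def)
qed

lemma in_R_xx_x_superpot_4:
  "\<forall>a<4. \<forall>b<4. in_R_xx (\<lambda>x y. x_superpot [x, y, a, b])"
  "\<forall>a<4. \<forall>b<4. in_R_xx (\<lambda>x y. x_superpot [a, x, y, b])"
  "\<forall>a<4. \<forall>b<4. in_R_xx (\<lambda>x y. x_superpot [a, b, x, y])"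
proof -
  have "al * al = 1" using al by auto
  then show "\<forall>a<4. \<forall>b<4. in_R_xx (\<lambda>x y. x_superpot [x, y, a, b])"
    "\<forall>a<4. \<forall>b<4. in_R_xx (\<lambda>x y. x_superpot [a, x, y, b])"
    "\<forall>a<4. \<forall>b<4. in_R_xx (\<lambda>x y. x_superpot [a, b, x, y])"
    unfolding in_R_xx_def x_superpot_def x_superpot_table_def less_4_cases
    by (simp, simp add: field_simps)+
qed

lemma in_R_xx_x_superpot:
  assumes "set A \<subseteq> {..<4}" "set B \<subseteq> {..<4}"
  shows "in_R_xx (\<lambda>x y. x_superpot (A @ [x, y] @ B))"
proof (cases "length A + length B = 2")
  case False
  then show ?thesis by (simp add: x_superpot_length in_R_xx_def)
next
  case True
  then have "length A = 0 \<and> length B = 2 \<or> length A = 1 \<and> length B = 1 \<or> length A = 2 \<and> length B = 0"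
    by presburger
  then consider b1 b2 where "A = []" "B = [b1, b2]" | a1 b1 where "A = [a1]" "B = [b1]"
    | a1 a2 where "A = [a1, a2]" "B = []"
    by (auto simp: length_Suc_conv numeral_2_eq_2)
  then show ?thesis using assms in_R_xx_x_superpot_4 by cases auto
qed

definition coeff_past_x :: "nat \<Rightarrow> nat \<Rightarrow> complex" where
  "coeff_past_x a b = (if a = 4 then (-1) ^ b / u3 else if a = 5 then - ((-1) ^ b) / u3
     else if a = 6 then - \<i> * (- \<i>) ^ b / u4 else if a = 7 then - (\<i> ^ b) / u4 else 1)"

definition coeff_z_past_y :: "nat \<Rightarrow> nat \<Rightarrow> complex" where
  "coeff_z_past_y a b = (if a = 6 \<and> b = 4 then -1/u2 else if a = 7 \<and> b = 4 then -1/u1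
     else if a = 6 \<and> b = 5 then -1/u1 else if a = 7 \<and> b = 5 then -1/u2 else 1)"

text \<open>\<open>pass_coeff a r\<close> is the scalar picked up when the letter \<open>a\<close> is commuted to the right past
  the word \<open>r\<close> using the relations of \<open>B\<close>; \<open>x\<close>-letters are never moved.\<close>
fun pass_coeff :: "nat \<Rightarrow> nat list \<Rightarrow> complex" where
  "pass_coeff a [] = 1"
| "pass_coeff a (b # r) = (if is_x a then 1 else if is_x b then coeff_past_x a b * pass_coeff (flip a) r
     else if is_z a \<and> is_y b then coeff_z_past_y a b * pass_coeff a r else pass_coeff a r)"

fun sort_coeff :: "nat list \<Rightarrow> complex" where
  "sort_coeff [] = 1"
| "sort_coeff (a # r) = pass_coeff a r * sort_coeff r"

fun pass_block :: "nat list \<Rightarrow> nat list \<Rightarrow> complex" where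
  "pass_block [] s = 1"
| "pass_block (c # p) s = pass_coeff (flips (count_x p) c) s * pass_block p s"

fun pass_rest :: "nat list \<Rightarrow> nat \<Rightarrow> nat list \<Rightarrow> complex" where
  "pass_rest [] n q = 1"
| "pass_rest (c # p) n q = pass_coeff c p * pass_coeff (flips (count_x p + n) c) q * pass_rest p n q"

definition superpot0 :: "nat list \<Rightarrow> complex" where
  "superpot0 ws = (if ws \<in> words 8 then sort_coeff ws * x_superpot (filter is_x ws)
     * pair_superpot 4 5 be (pushed is_y 0 ws) * pair_superpot 6 7 ga (pushed is_z 0 ws) else 0)"

lemma pass_coeff_x: "is_x a \<Longrightarrow> pass_coeff a r = 1"
  by (cases r) auto

lemma pass_coeff_append: "pass_coeff a (s @ m) = pass_coeff a s * pass_coeff (flips (count_x s) a) m"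
proof (induction s arbitrary: a)
  case (Cons b s)
  then show ?case by (cases "is_x a") (simp_all add: pass_coeff_x flips_x flips_Suc)
qed simp

lemma sort_coeff_append:
  "sort_coeff (p @ s @ q) = pass_block p s * sort_coeff (s @ q) * pass_rest p (count_x s) q"
proof (induction p)
  case (Cons c p)
  have "pass_coeff c (p @ s @ q) = pass_coeff c p * pass_coeff (flips (count_x p) c) s
      * pass_coeff (flips (count_x p + count_x s) c) q"
    by (simp add: pass_coeff_append flips_flips add.commute)
  then show ?case using Cons by (simp add: algebra_simps)
qed simp

lemma superpot0_append: "superpot0 (p @ s @ q) = (if p @ s @ q \<in> words 8 then
   pass_block p s * sort_coeff (s @ q) * pass_rest p (count_x s) q
   * x_superpot (filter is_x p @ filter is_x s @ filter is_x q)
   * pair_superpot 4 5 be (pushed is_y (count_x s + count_x q) p @ pushed is_y (count_x q) s @ pushed is_y 0 q)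
   * pair_superpot 6 7 ga (pushed is_z (count_x s + count_x q) p @ pushed is_z (count_x q) s @ pushed is_z 0 q)
   else 0)"
  unfolding superpot0_def sort_coeff_append by (simp add: pushed_append add.commute)

lemma pass_block_cong: "(\<And>d. pass_coeff d s = pass_coeff d s') \<Longrightarrow> pass_block p s = pass_block p s'"
  by (induction p) auto

lemma superpot0_exchange:
  assumes "\<And>d. pass_coeff d s = pass_coeff d s'" "count_x s = count_x s'"
    "sort_coeff (s @ q) = K * sort_coeff (s' @ q)" "filter is_x s = filter is_x s'"
    "pushed is_y (count_x q) s = pushed is_y (count_x q) s'"
    "pushed is_z (count_x q) s = pushed is_z (count_x q) s'"
    "length s = length s'" "set s \<subseteq> {..<8}" "set s' \<subseteq> {..<8}"
  shows "superpot0 (p @ s @ q) = K * superpot0 (p @ s' @ q)"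
proof -
  have "p @ s @ q \<in> words 8 \<longleftrightarrow> p @ s' @ q \<in> words 8" using assms(7-9) by (auto simp: words_def)
  then show ?thesis unfolding superpot0_append pass_block_cong[OF assms(1)] assms(2-6) by simp
qed

lemma superpot0_swap_x:
  assumes "a \<in> {4,5,6,7}" "b < 4"
  shows "superpot0 (p @ a # b # q) = coeff_past_x a b * superpot0 (p @ b # flip a # q)"
proof -
  have ab: "is_x b" "\<not> is_x a" "\<not> is_y b" "\<not> is_z b" using assms by (auto simp: is_x_def is_y_def is_z_def)
  have "superpot0 (p @ [a, b] @ q) = coeff_past_x a b * superpot0 (p @ [b, flip a] @ q)"
  proof (rule superpot0_exchange)
    show "pass_coeff d [a, b] = pass_coeff d [b, flip a]" for d
      using assms by (cases "is_x d") (auto simp: is_z_def is_y_def coeff_z_past_y_def flip_def is_x_def)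
  qed (use ab assms in \<open>auto simp: pass_coeff_x flips_Suc flip_def\<close>)
  then show ?thesis by simp
qed

lemma superpot0_swap_z_y:
  assumes "a \<in> {6,7}" "b \<in> {4,5}"
  shows "superpot0 (p @ a # b # q) = coeff_z_past_y a b * superpot0 (p @ b # a # q)"
proof -
  have ab: "is_z a" "is_y b" "\<not> is_x a" "\<not> is_x b" "\<not> is_y a" "\<not> is_z b"
    using assms by (auto simp: is_x_def is_y_def is_z_def)
  have "superpot0 (p @ [a, b] @ q) = coeff_z_past_y a b * superpot0 (p @ [b, a] @ q)"
  proof (rule superpot0_exchange)
    show "pass_coeff d [a, b] = pass_coeff d [b, a]" for d using ab by (cases "is_x d") auto
  qed (use ab assms in auto)
  then show ?thesis by simp
qed

lemma superpot0_dup: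
  assumes "a \<in> {4,5,6,7}"
  shows "superpot0 (p @ a # a # q) = 0"
  using assms superpot0_append[of p "[a, a]" q] by (auto simp: pair_superpot_dup)

lemma superpot0_swap_pair:
  assumes "(a, b, c) = (4, 5, be) \<or> (a, b, c) = (6, 7, ga)"
  shows "superpot0 (p @ b # a # q) = - c * superpot0 (p @ a # b # q)"
proof -
  let ?k = "count_x q"
  have kinds: "\<not> is_x a" "\<not> is_x b" "is_y a = is_y b" "is_z a = is_z b" using assms by auto
  have pass: "pass_block p [b, a] = pass_block p [a, b]"
    using kinds by (intro pass_block_cong) (simp add: pass_coeff_x)
  have words: "p @ [b, a] @ q \<in> words 8 \<longleftrightarrow> p @ [a, b] @ q \<in> words 8" by (auto simp: words_def)
  have swap: "pair_superpot a b c (A @ [flips ?k b, flips ?k a] @ B)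
      = - c * pair_superpot a b c (A @ [flips ?k a, flips ?k b] @ B)" for A B
  proof (rule pair_superpot_swap)
    show "c * c = 1" using assms be ga by auto
    show "(flips ?k a, flips ?k b) = (a, b) \<or> (flips ?k a, flips ?k b) = (b, a)"
      using assms by (auto simp: flips_def flip_def)
  qed (use assms in auto)
  note expand = superpot0_append[of p "[b, a]" q] superpot0_append[of p "[a, b]" q]
  from assms consider "a = 4" "b = 5" "c = be" | "a = 6" "b = 7" "c = ga" by auto
  then show ?thesis
  proof cases
    case 1
    then show ?thesis
      using expand pass words swap[of "pushed is_y ?k p" "pushed is_y 0 q"] by (simp add: algebra_simps)
  next
    case 2
    then show ?thesis
      using expand pass words swap[of "pushed is_z ?k p" "pushed is_z 0 q"] by (simp add: algebra_simps)
  qed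
qed

lemma in_R_xx_scale: "in_R_xx f \<Longrightarrow> in_R_xx (\<lambda>x y. c * f x y)"
  unfolding in_R_xx_def by simp (simp add: field_simps)

lemma in_R_xx_cong: "(\<And>x y. x < 4 \<Longrightarrow> y < 4 \<Longrightarrow> f x y = g x y) \<Longrightarrow> in_R_xx f \<longleftrightarrow> in_R_xx g"
  unfolding in_R_xx_def by simp

text \<open>The relations among the \<open>x\<^sub>j\<close> are invariant under the substitution that moving a
  \<open>y\<close> or \<open>z\<close> letter past them effects.\<close>
lemma in_R_xx_pass_coeff:
  assumes "in_R_xx f"
  shows "in_R_xx (\<lambda>x y. pass_coeff d [x, y] * f x y)"
proof (cases "d \<in> {4,5,6,7}")
  case False
  then have "pass_coeff d [x, y] = 1" if "x < 4" "y < 4" for x y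
    using that by (cases "is_x d") (auto simp: pass_coeff_x is_x_def flip_def coeff_past_x_def)
  then show ?thesis using assms in_R_xx_cong[of "\<lambda>x y. pass_coeff d [x, y] * f x y" f] by simp
next
  case True
  have powers: "\<i> ^ 2 = -1" "\<i> ^ 3 = - \<i>" "(- \<i>) ^ 2 = -1" "(- \<i>) ^ 3 = \<i>"
    "(-1 :: complex) ^ 2 = 1" "(-1 :: complex) ^ 3 = -1"
    by (simp_all add: power2_eq_square power3_eq_cube)
  from True have "d = 4 \<or> d = 5 \<or> d = 6 \<or> d = 7" by simp
  then show ?thesis using assms unfolding in_R_xx_def
    apply (elim disjE)
       apply (simp_all add: is_x_def coeff_past_x_def flip_def powers)
       apply (simp_all add: field_simps u3 u4)
    done
qed

lemma in_R_xx_pass_block: "in_R_xx f \<Longrightarrow> in_R_xx (\<lambda>x y. pass_block p [x, y] * f x y)"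
proof (induction p)
  case (Cons c p)
  then have "in_R_xx (\<lambda>x y. pass_coeff (flips (count_x p) c) [x, y] * (pass_block p [x, y] * f x y))"
    by (intro in_R_xx_pass_coeff) blast
  then show ?case by (simp add: mult.assoc)
qed simp

lemma superpot0_in_R_xx: "in_R_xx (\<lambda>x y. superpot0 (p @ [x, y] @ q))"
proof -
  \<comment> \<open>the factor of \<open>superpot0 (p @ [x, y] @ q)\<close> that does not depend on the letters \<open>x, y < 4\<close>\<close>
  define C where "C = (if p @ [0, 0] @ q \<in> words 8 then sort_coeff q * pass_rest p 2 q
      * pair_superpot 4 5 be (pushed is_y (2 + count_x q) p @ pushed is_y 0 q)
      * pair_superpot 6 7 ga (pushed is_z (2 + count_x q) p @ pushed is_z 0 q) else 0)"
  have expand: "superpot0 (p @ [x, y] @ q)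
      = C * (pass_block p [x, y] * x_superpot (filter is_x p @ [x, y] @ filter is_x q))"
    if "x < 4" "y < 4" for x y
  proof -
    have "is_x x" "is_x y" "\<not> is_y x" "\<not> is_y y" "\<not> is_z x" "\<not> is_z y"
      using that by (auto simp: is_x_def is_y_def is_z_def)
    moreover have "p @ [x, y] @ q \<in> words 8 \<longleftrightarrow> p @ [0, 0] @ q \<in> words 8"
      using that by (auto simp: words_def)
    ultimately show ?thesis
      unfolding superpot0_append C_def by (simp add: pass_coeff_x algebra_simps numeral_2_eq_2)
  qed
  have "set (filter is_x p) \<subseteq> {..<4}" "set (filter is_x q) \<subseteq> {..<4}" by (auto simp: is_x_def)
  then have "in_R_xx (\<lambda>x y. C * (pass_block p [x, y] * x_superpot (filter is_x p @ [x, y] @ filter is_x q)))"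
    by (rule in_R_xx_scale[OF in_R_xx_pass_block[OF in_R_xx_x_superpot]])
  then show ?thesis by (subst in_R_xx_cong) (use expand in auto)
qed

lemma superpot0_in_R_yz: "in_R_yz (\<lambda>x y. superpot0 (p @ [x, y] @ q))"
  unfolding in_R_yz_def using u1 u2 u3 u4
  by (simp add: superpot0_swap_x superpot0_swap_z_y superpot0_dup
      superpot0_swap_pair[of 4 5 be] superpot0_swap_pair[of 6 7 ga]
      coeff_past_x_def coeff_z_past_y_def flip_def power2_eq_square power3_eq_cube field_simps)

lemma superpot_superpot0: "superpot superpot0"
  unfolding superpot_def in_R_expl_def
  using superpot0_in_R_xx superpot0_in_R_yz by (auto simp: superpot0_def)

end

section \<open>Uniqueness of the superpotential\<close>

text \<open>Listing the generators by increasing \<open>rank\<close> gives \<open>x\<^sub>2 x\<^sub>4 x\<^sub>1 x\<^sub>3 y\<^sub>1 y\<^sub>2 z\<^sub>1 z\<^sub>2\<close>; every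
  relation of \<open>B\<close> rewrites a product \<open>a b\<close> with \<open>rank b \<le> rank a\<close> into products whose first
  letter has smaller rank.\<close>
definition rank :: "nat \<Rightarrow> nat" where
  "rank a = (if a = 0 then 2 else if a = 1 then 0 else if a = 2 then 3 else if a = 3 then 1 else a)"

lemma rank_simps [simp]:
  "rank 0 = 2" "rank (Suc 0) = 0" "rank 2 = 3" "rank 3 = 1" "rank 4 = 4" "rank 5 = 5" "rank 6 = 6" "rank 7 = 7"
  by (simp_all add: rank_def)

definition normal_word :: "nat list" where "normal_word = [1, 3, 0, 2, 4, 5, 6, 7]"

lemma not_successively_split:
  "\<not> successively P xs \<Longrightarrow> \<exists>p a b q. xs = p @ a # b # q \<and> \<not> P a b"
proof (induction P xs rule: successively.induct)
  case (3 P x y xs)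
  show ?case
  proof (cases "P x y")
    case True
    with "3.prems" obtain p a b q where "y # xs = p @ a # b # q" "\<not> P a b"
      using "3.IH" by auto
    then show ?thesis by (metis append_Cons)
  qed fastforce
qed simp_all

lemma successively_rank_normal_word:
  assumes "successively (\<lambda>a b. rank a < rank b) xs" "xs \<in> words 8"
  shows "xs = normal_word"
proof (rule map_sorted_distinct_set_unique[of rank])
  have "successively (<) (map rank xs)" using assms(1) by (simp add: successively_map)
  then have "sorted_wrt (<) (map rank xs)" by (simp add: successively_conv_sorted_wrt)
  then show "sorted (map rank xs)" "distinct (map rank xs)" by (simp_all add: strict_sorted_iff)
  have xs: "set xs \<subseteq> {..<8}" "length xs = 8" using assms(2) by (simp_all add: words_def)
  have "inj_on rank {..<8}" by (auto simp: inj_on_def rank_def)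
  then show "inj_on rank (set xs \<union> set normal_word)"
    by (rule inj_on_subset) (use xs in \<open>auto simp: normal_word_def\<close>)
  then have "card (set xs) = 8"
    using \<open>distinct (map rank xs)\<close> xs by (simp add: distinct_map distinct_card)
  then have "set xs = {..<8}" using xs by (intro card_subset_eq) auto
  moreover have "set normal_word = {..<8}" by (auto simp: normal_word_def less_8_cases)
  ultimately show "set xs = set normal_word" by simp
  show "sorted (map rank normal_word)" "distinct (map rank normal_word)"
    by (simp_all add: normal_word_def rank_def)
qed

context B_params
begin

lemma in_R_expl_reduce:
  assumes t: "in_R_expl t" and ab: "a < 8" "b < 8" "rank b \<le> rank a"
    and smaller: "\<And>c d. c < 8 \<Longrightarrow> d < 8 \<Longrightarrow> rank c < rank a \<Longrightarrow> t c d = 0"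
  shows "t a b = 0"
  using ab t u1 u2 u3 u4 unfolding less_8_cases in_R_expl_def in_R_xx_def in_R_yz_def
  by (elim disjE) (simp_all add: smaller)

lemma superpot_vanishes:
  assumes w: "superpot w" and normal: "w normal_word = 0"
  shows "w xs = 0"
proof (induction xs rule: wf_induct[OF wf_lenlex[OF wf_inv_image[OF wf_less_than, of rank]]])
  case (1 xs)
  show ?case
  proof (cases "xs \<in> words 8")
    case False
    then show ?thesis using w unfolding superpot_def by blast
  next
    case xs: True
    show ?thesis
    proof (cases "successively (\<lambda>a b. rank a < rank b) xs")
      case True
      then have "xs = normal_word" using xs by (rule successively_rank_normal_word)
      then show ?thesis using normal by simp
    next
      case False
      then obtain p a b q where split: "xs = p @ a # b # q" "rank b \<le> rank a"
        using not_successively_split by fastforce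
      have pq: "set p \<subseteq> {..<8}" "set q \<subseteq> {..<8}" "length p + length q = 6" "a < 8" "b < 8"
        using xs split(1) by (auto simp: words_def)
      have smaller: "w (p @ c # d # q) = 0" if "rank c < rank a" for c d
      proof -
        have "(c, a) \<in> inv_image less_than rank" using that by simp
        then have "(p @ c # d # q, xs) \<in> lenlex (inv_image less_than rank)"
          unfolding lenlex_conv lex_conv split(1) by auto
        then show ?thesis using "1.IH" by simp
      qed
      have "in_R_expl (\<lambda>x y. w (p @ [x, y] @ q))" using w pq unfolding superpot_def by simp
      then have "(\<lambda>x y. w (p @ [x, y] @ q)) a b = 0"
        by (rule in_R_expl_reduce[OF _ pq(4,5) split(2)]) (simp add: smaller)
      then show ?thesis using split(1) by simp
    qed
  qed
qed

end

section \<open>The homological determinant\<close>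

lemma tact_scale: "tact M (\<lambda>xs. c * f xs) = (\<lambda>xs. c * tact M f xs)"
  unfolding tact_def by (simp add: fun_eq_iff sum_distrib_left mult.assoc)

lemma phi_act_scale: "phi_act g (\<lambda>xs. c * f xs) = (\<lambda>xs. c * phi_act g f xs)"
  by (simp add: phi_act_def fun_eq_iff)

lemma word_grade_normal_word: "word_grade normal_word = d8_e"
  by (simp add: word_grade_def normal_word_def gen_grade_def d8_e_def)

context B_params
begin

lemma superpot0_normal_word: "superpot0 normal_word = al * (1 - \<i>)"
  by (simp add: superpot0_def normal_word_def words_def x_superpot_def x_superpot_table_def
      pair_superpot_def flips_def is_x_def is_y_def is_z_def)

lemma superpot0_normal_word_nonzero: "superpot0 normal_word \<noteq> 0"
  using al by (auto simp: superpot0_normal_word)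

lemma superpot_scale: "superpot w \<Longrightarrow> superpot (\<lambda>xs. c * w xs)"
  using superpot_diff[of "\<lambda>_. 0" w "- c"] by (simp add: superpot_def in_R_expl_def in_R_xx_def in_R_yz_def)

lemma superpot_multiple_superpot0:
  assumes "superpot w"
  shows "w = (\<lambda>xs. w normal_word / superpot0 normal_word * superpot0 xs)"
proof
  fix xs
  let ?v = "\<lambda>xs. w xs - w normal_word / superpot0 normal_word * superpot0 xs"
  have "superpot ?v" using assms superpot_superpot0 by (rule superpot_diff)
  moreover have "?v normal_word = 0" using superpot0_normal_word_nonzero by simp
  ultimately have "?v xs = 0" by (rule superpot_vanishes)
  then show "w xs = w normal_word / superpot0 normal_word * superpot0 xs" by simp
qed

lemma superpot_eigen:
  assumes preserves: "\<And>f. superpot f \<Longrightarrow> superpot (T f)"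
    and scale: "\<And>c f. T (\<lambda>xs. c * f xs) = (\<lambda>xs. c * T f xs)"
    and w: "superpot w"
  shows "T w = (\<lambda>xs. T superpot0 normal_word / superpot0 normal_word * w xs)"
proof -
  let ?k = "w normal_word / superpot0 normal_word"
    and ?e = "T superpot0 normal_word / superpot0 normal_word"
  have "T w = (\<lambda>xs. ?k * T superpot0 xs)"
    using scale[of ?k superpot0] superpot_multiple_superpot0[OF w] by simp
  also have "T superpot0 = (\<lambda>xs. ?e * superpot0 xs)"
    using superpot_multiple_superpot0[OF preserves[OF superpot_superpot0]] .
  finally show ?thesis
    by (subst (2) superpot_multiple_superpot0[OF w]) (simp add: fun_eq_iff ac_simps)
qed

lemma tact_Mr_superpot0_normal_word: "tact Mr superpot0 normal_word = superpot0 normal_word"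
proof -
  have "omega ^ 2 * omega ^ 6 * (omega ^ 7 * omega) = omega ^ 16" by (simp flip: power_add power_Suc2)
  also have "\<dots> = (omega ^ 4) ^ 4" by (simp flip: power_mult)
  finally have "omega ^ 2 * omega ^ 6 * (omega ^ 7 * omega) = 1" by (simp add: omega_pow_4)
  then show ?thesis
    by (simp add: tact_Mr normal_word_def words_def perm_r_def Mr_def superpot0_def
        x_superpot_def x_superpot_table_def pair_superpot_def flips_def algebra_simps)
qed

lemma tact_Ms_superpot0_normal_word: "tact Ms superpot0 normal_word = be * ga * superpot0 normal_word"
  by (simp add: tact_Ms normal_word_def words_def perm_s_def Ms_def superpot0_def
      x_superpot_def x_superpot_table_def pair_superpot_def flips_def flip_def algebra_simps)

lemma tact_Mr_superpot: "superpot w \<Longrightarrow> tact Mr w = w"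
  using superpot_eigen[of "tact Mr" w] superpot_tact_r tact_scale superpot0_normal_word_nonzero
  by (simp add: tact_Mr_superpot0_normal_word)

lemma tact_Ms_superpot: "superpot w \<Longrightarrow> tact Ms w = (\<lambda>xs. be * ga * w xs)"
  using superpot_eigen[of "tact Ms" w] superpot_tact_s tact_scale superpot0_normal_word_nonzero
  by (simp add: tact_Ms_superpot0_normal_word)

lemma phi_act_superpot:
  "superpot w \<Longrightarrow> phi_act g w = (\<lambda>xs. (if g = d8_e then 1 else 0) * w xs)"
  using superpot_eigen[of "phi_act g" w] superpot_phi_act phi_act_scale superpot0_normal_word_nonzero
  by (simp add: phi_act_def word_grade_normal_word)

lemma funpow_superpot_eigen:
  assumes eigen: "\<And>w. superpot w \<Longrightarrow> T w = (\<lambda>xs. c * w xs)" and w: "superpot w"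
  shows "(T ^^ n) w = (\<lambda>xs. c ^ n * w xs)"
proof (induction n)
  case (Suc n)
  have "(T ^^ Suc n) w = T (\<lambda>xs. c ^ n * w xs)" using Suc by simp
  also have "\<dots> = (\<lambda>xs. c ^ Suc n * w xs)" using eigen[OF superpot_scale[OF w]] by (simp add: mult.assoc)
  finally show ?case .
qed simp

lemma DG_act_superpot:
  assumes w: "superpot w"
  shows "DG_act (g, (a, b)) w = (\<lambda>xs. (be * ga) ^ b * (if g = d8_e then 1 else 0) * w xs)"
proof -
  let ?w = "\<lambda>xs. (if g = d8_e then 1 else 0) * w xs"
  have w': "superpot ?w" using w by (rule superpot_scale)
  have "DG_act (g, (a, b)) w = (tact Ms ^^ b) ((tact Mr ^^ a) ?w)"
    by (simp add: DG_act_def phi_act_superpot[OF w])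
  also have "(tact Mr ^^ a) ?w = ?w"
    using funpow_superpot_eigen[of "tact Mr" 1, OF _ w'] tact_Mr_superpot by simp
  also have "(tact Ms ^^ b) ?w = (\<lambda>xs. (be * ga) ^ b * ?w xs)"
    using funpow_superpot_eigen[of "tact Ms", OF tact_Ms_superpot w'] .
  finally show ?thesis by (simp add: fun_eq_iff)
qed

lemma hdet_eq: "hdet al be ga u1 u2 u3 u4 (g, h) = (be * ga) ^ snd h * (if g = d8_e then 1 else 0)"
  unfolding hdet_def
proof (rule the_equality)
  obtain a b where h: "h = (a, b)" by fastforce
  let ?e = "(be * ga) ^ snd h * (if g = d8_e then 1 else 0)"
  show "\<forall>w\<in>superpot_space 8 (rels al be ga u1 u2 u3 u4). DG_act (g, h) w = (\<lambda>xs. ?e * w xs)"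
  proof
    fix w assume "w \<in> superpot_space 8 (rels al be ga u1 u2 u3 u4)"
    then have "superpot w" by (simp add: superpot_space_iff)
    then show "DG_act (g, h) w = (\<lambda>xs. ?e * w xs)" unfolding h by (simp add: DG_act_superpot)
  qed
  fix c
  assume "\<forall>w\<in>superpot_space 8 (rels al be ga u1 u2 u3 u4). DG_act (g, h) w = (\<lambda>xs. c * w xs)"
  then have "DG_act (g, h) superpot0 = (\<lambda>xs. c * superpot0 xs)"
    using superpot_superpot0 superpot_space_iff by blast
  then have "c * superpot0 normal_word = ?e * superpot0 normal_word"
    using DG_act_superpot[OF superpot_superpot0] unfolding h by (metis snd_conv)
  then show "c = ?e" using superpot0_normal_word_nonzero by simp
qed

end

theorem mainTheorem15:
  fixes \<alpha> \<beta> \<gamma> u1 u2 u3 u4 :: complex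
  assumes "\<alpha> \<in> {1, -1}" and "\<beta> \<in> {1, -1}" and "\<gamma> \<in> {1, -1}"
    and "u1 \<noteq> 0" and "u2 \<noteq> 0" and "u3 \<noteq> 0" and "u4 \<noteq> 0"
  shows "(\<forall>g\<in>D8. hdet \<alpha> \<beta> \<gamma> u1 u2 u3 u4 (g, d8_e) = (if g = d8_e then 1 else 0))
    \<and> hdet \<alpha> \<beta> \<gamma> u1 u2 u3 u4 (d8_e, d8_r) = 1
    \<and> hdet \<alpha> \<beta> \<gamma> u1 u2 u3 u4 (d8_e, d8_s) = \<beta> * \<gamma>
    \<and> ((\<forall>g\<in>D8. \<forall>h\<in>D8. hdet \<alpha> \<beta> \<gamma> u1 u2 u3 u4 (g, h) = (if g = d8_e then 1 else 0))
        \<longleftrightarrow> \<beta> = \<gamma>)"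
proof -
  interpret B_params \<alpha> \<beta> \<gamma> u1 u2 u3 u4
    using assms by unfold_locales auto
  have hdet: "hdet \<alpha> \<beta> \<gamma> u1 u2 u3 u4 (g, h) = (\<beta> * \<gamma>) ^ snd h * (if g = d8_e then 1 else 0)"
    for g h by (rule hdet_eq)
  have \<beta>\<gamma>: "\<beta> * \<gamma> = 1 \<longleftrightarrow> \<beta> = \<gamma>" using assms(2,3) by auto
  have "d8_e \<in> D8" "d8_s \<in> D8" by (simp_all add: D8_def d8_e_def d8_s_def)
  then show ?thesis
    using \<beta>\<gamma> by (auto simp: hdet d8_e_def d8_r_def d8_s_def)
qed

end
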